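(* Let $\Delta_1,\Delta_2$ be simplicial complexes on $[n]$ and let $A,B,A',B'\subseteq[n]$ be nonempty sets such that $A\cap B=\emptyset$, $A'\cap B'=\emptyset$, and neither $A\cup B$ nor $A'\cup B'$ meets the vertex set of $\Delta_1\cup\Delta_2$. Then $$\tilde H_i\big((A*\Delta_1)\cup(B*\Delta_2);\mathbb{K}\big)\cong\tilde H_i\big((A'*\Delta_1)\cup(B'*\Delta_2);\mathbb{K}\big)\quad\text{for all } i>0.$$
   Context: A simplicial complex on $[n]$ is a finite family of subsets of $[n]$ closed under taking subsets (singletons need not belong to it); its vertex set is the union of its faces. For a nonempty $A\subseteq[n]$ and a simplicial complex $\Delta$ on $[n]$, the cone $A*\Delta$ is the simplicial complex whose facets are the sets $A\cup F$ with $F$ a facet of $\Delta$. $\tilde H_i(\,\cdot\,;\mathbb{K})$ denotes reduced simplicial homology with coefficients in the field $\mathbb{K}$. *)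

theory Defs
  imports Main
begin

definition simplicial_complex :: "nat \<Rightarrow> nat set set \<Rightarrow> bool" where
  "simplicial_complex n \<Delta> \<longleftrightarrow> \<Delta> \<subseteq> Pow {1..n} \<and> (\<forall>F\<in>\<Delta>. \<forall>G. G \<subseteq> F \<longrightarrow> G \<in> \<Delta>)"

definition vertex_set :: "nat set set \<Rightarrow> nat set" where
  "vertex_set \<Delta> = \<Union>\<Delta>"

definition facets :: "nat set set \<Rightarrow> nat set set" where
  "facets \<Delta> = {F \<in> \<Delta>. \<forall>G\<in>\<Delta>. F \<subseteq> G \<longrightarrow> G = F}"

definition cone :: "nat set \<Rightarrow> nat set set \<Rightarrow> nat set set" where
  "cone A \<Delta> = {G. \<exists>F\<in>facets \<Delta>. G \<subseteq> A \<union> F}"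

text \<open>A face F of cardinality
  d+1 has dimension d; the empty face has dimension -1 (augmented complex, giving
  reduced homology).\<close>
definition chains :: "nat set set \<Rightarrow> int \<Rightarrow> (nat set \<Rightarrow> 'k::field) set" where
  "chains \<Delta> d = {c. \<forall>F. c F \<noteq> 0 \<longrightarrow> F \<in> \<Delta> \<and> int (card F) = d + 1}"

text \<open>Boundary map, faces oriented by the natural order of the vertices:
  d(e_F) = sum over v in F of (-1)^(number of u in F with u < v) e_(F - {v}).\<close>
definition bd :: "nat set set \<Rightarrow> (nat set \<Rightarrow> 'k::field) \<Rightarrow> (nat set \<Rightarrow> 'k)" where
  "bd \<Delta> c = (\<lambda>G. if G \<in> \<Delta> then
       (\<Sum>v\<in>vertex_set \<Delta> - G. (-1) ^ card {u\<in>G. u < v} * c (insert v G))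
     else 0)"

definition cycles :: "nat set set \<Rightarrow> int \<Rightarrow> (nat set \<Rightarrow> 'k::field) set" where
  "cycles \<Delta> d = {c \<in> chains \<Delta> d. bd \<Delta> c = (\<lambda>G. 0)}"

definition boundaries :: "nat set set \<Rightarrow> int \<Rightarrow> (nat set \<Rightarrow> 'k::field) set" where
  "boundaries \<Delta> d = bd \<Delta> ` chains \<Delta> (d + 1)"

definition hclass :: "nat set set \<Rightarrow> int \<Rightarrow> (nat set \<Rightarrow> 'k::field) \<Rightarrow> (nat set \<Rightarrow> 'k) set" where
  "hclass \<Delta> d z = (\<lambda>b F. z F + b F) ` boundaries \<Delta> d"

definition reduced_homology :: "nat set set \<Rightarrow> int \<Rightarrow> (nat set \<Rightarrow> 'k::field) set set" where
  "reduced_homology \<Delta> d = hclass \<Delta> d ` cycles \<Delta> d"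

text \<open>Isomorphism of 'k-vector spaces H~_d(Delta1;'k) and H~_e(Delta2;'k): a bijection
  between the quotient spaces which is additive and 'k-homogeneous (operations on
  cosets computed via representatives).\<close>
definition homology_iso ::
  "'k::field itself \<Rightarrow> nat set set \<Rightarrow> int \<Rightarrow> nat set set \<Rightarrow> int \<Rightarrow> bool" where
  "homology_iso TYPE('k) \<Delta>1 d1 \<Delta>2 d2 \<longleftrightarrow>
    (\<exists>f :: (nat set \<Rightarrow> 'k) set \<Rightarrow> (nat set \<Rightarrow> 'k) set.
       bij_betw f (reduced_homology \<Delta>1 d1) (reduced_homology \<Delta>2 d2) \<and>
       (\<forall>z w z' w'. z \<in> cycles \<Delta>1 d1 \<longrightarrow> w \<in> cycles \<Delta>1 d1 \<longrightarrow>
           z' \<in> cycles \<Delta>2 d2 \<longrightarrow> w' \<in> cycles \<Delta>2 d2 \<longrightarrow>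
           f (hclass \<Delta>1 d1 z) = hclass \<Delta>2 d2 z' \<longrightarrow>
           f (hclass \<Delta>1 d1 w) = hclass \<Delta>2 d2 w' \<longrightarrow>
           f (hclass \<Delta>1 d1 (\<lambda>F. z F + w F)) = hclass \<Delta>2 d2 (\<lambda>F. z' F + w' F)) \<and>
       (\<forall>a z z'. z \<in> cycles \<Delta>1 d1 \<longrightarrow> z' \<in> cycles \<Delta>2 d2 \<longrightarrow>
           f (hclass \<Delta>1 d1 z) = hclass \<Delta>2 d2 z' \<longrightarrow>
           f (hclass \<Delta>1 d1 (\<lambda>F. a * z F)) = hclass \<Delta>2 d2 (\<lambda>F. a * z' F)))"

end

theory Submission
  imports Defs
begin

text \<open>
  Deleting a vertex v from a complex L does not change its homology as soon as every face
  of L through v stays a face after adding some vertex a \<noteq> v: coning with apex a the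
  chains on faces through v is a chain homotopy between the identity and a retraction onto
  the deletion. In (X * \<Delta>1) \<union> (Y * \<Delta>2) with X nonempty, a vertex added to X that
  lies outside Y and outside the vertex sets of \<Delta>1, \<Delta>2 is of this kind.
\<close>

section \<open>Simplicial chains and the boundary map\<close>

definition incidence_sign :: "nat set \<Rightarrow> nat \<Rightarrow> 'k::field" where
  "incidence_sign G v = (-1) ^ card {u\<in>G. u < v}"

lemma incidence_sign_insert:
  assumes "w \<notin> G"
  shows "incidence_sign (insert w G) v =
    (if w < v then - incidence_sign G v else (incidence_sign G v :: 'k::field))"
proof (cases "w < v")
  case True
  have "finite {u\<in>G. u < v}" by (rule finite_subset[of _ "{..<v}"]) auto
  moreover have "{u\<in>insert w G. u < v} = insert w {u\<in>G. u < v}" using True by auto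
  ultimately show ?thesis using True assms by (simp add: incidence_sign_def)
next
  case False
  then have "{u\<in>insert w G. u < v} = {u\<in>G. u < v}" by auto
  then show ?thesis using False by (simp add: incidence_sign_def)
qed

lemma incidence_sign_square: "incidence_sign G v * incidence_sign G v = (1::'k::field)"
  by (simp add: incidence_sign_def flip: power_mult_distrib)

lemma bd_incidence:
  "bd K c = (\<lambda>G. if G \<in> K then \<Sum>w\<in>\<Union>K - G. incidence_sign G w * c (insert w G) else 0)"
  unfolding bd_def incidence_sign_def vertex_set_def by (rule refl)

lemma bd_add: "bd K (\<lambda>F. x F + y F) = (\<lambda>G. bd K x G + bd K (y :: nat set \<Rightarrow> 'k::field) G)"
  by (rule ext) (simp add: bd_incidence sum.distrib distrib_left)

lemma bd_diff: "bd K (\<lambda>F. x F - y F) = (\<lambda>G. bd K x G - bd K (y :: nat set \<Rightarrow> 'k::field) G)"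
  by (rule ext) (simp add: bd_incidence sum_subtractf right_diff_distrib)

lemma bd_scale: "bd K (\<lambda>F. s * x F) = (\<lambda>G. s * bd K (x :: nat set \<Rightarrow> 'k::field) G)"
  by (rule ext) (simp add: bd_incidence sum_distrib_left mult.left_commute)

lemma bd_uminus: "bd K (\<lambda>F. - x F) = (\<lambda>G. - bd K (x :: nat set \<Rightarrow> 'k::field) G)"
  by (rule ext) (simp add: bd_incidence sum_negf)

lemma bd_zero: "bd K (\<lambda>F. 0) = (\<lambda>G. 0 :: 'k::field)"
  by (rule ext) (simp add: bd_incidence)

lemma chains_add: "x \<in> chains K d \<Longrightarrow> y \<in> chains K d \<Longrightarrow> (\<lambda>F. x F + y F) \<in> chains K d"
  by (auto simp: chains_def) (metis add.right_neutral)+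

lemma chains_diff: "x \<in> chains K d \<Longrightarrow> y \<in> chains K d \<Longrightarrow> (\<lambda>F. x F - y F) \<in> chains K d"
  by (auto simp: chains_def) (metis eq_iff_diff_eq_0)+

lemma chains_scale: "x \<in> chains K d \<Longrightarrow> (\<lambda>F. s * x F) \<in> chains K d"
  by (auto simp: chains_def)

lemma chains_uminus: "x \<in> chains K d \<Longrightarrow> (\<lambda>F. - x F) \<in> chains K d"
  by (auto simp: chains_def)

lemma chains_zero: "(\<lambda>F. 0) \<in> chains K d"
  by (auto simp: chains_def)

lemma chains_mono: "K \<subseteq> L \<Longrightarrow> chains K d \<subseteq> chains L d"
  by (auto simp: chains_def)

lemma chains_vanish: "c \<in> chains K d \<Longrightarrow> F \<notin> K \<Longrightarrow> c F = 0"
  by (auto simp: chains_def)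

definition subset_closed :: "'a set set \<Rightarrow> bool" where
  "subset_closed K \<longleftrightarrow> (\<forall>F\<in>K. \<forall>G. G \<subseteq> F \<longrightarrow> G \<in> K)"

lemma subset_closed_Un: "subset_closed K \<Longrightarrow> subset_closed L \<Longrightarrow> subset_closed (K \<union> L)"
  by (auto simp: subset_closed_def)

lemma chains_insert_vanish:
  assumes "subset_closed K" "c \<in> chains K d" "G \<notin> K"
  shows "c (insert w G) = 0"
proof (rule chains_vanish[OF assms(2)])
  show "insert w G \<notin> K"
    using assms(1,3) unfolding subset_closed_def by (meson subset_insertI)
qed

lemma bd_chains:
  fixes c :: "nat set \<Rightarrow> 'k::field"
  assumes "finite (\<Union>K)" "c \<in> chains K (d + 1)"
  shows "bd K c \<in> chains K d"
  unfolding chains_def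
proof (intro CollectI allI impI)
  fix G assume nz: "bd K c G \<noteq> 0"
  then have GK: "G \<in> K" by (auto simp: bd_incidence split: if_splits)
  then have "(\<Sum>w\<in>\<Union>K - G. incidence_sign G w * c (insert w G)) \<noteq> 0"
    using nz by (simp add: bd_incidence)
  then obtain w where w: "w \<in> \<Union>K - G" "incidence_sign G w * c (insert w G) \<noteq> 0"
    by (meson sum.not_neutral_contains_not_neutral)
  then have "int (card (insert w G)) = d + 1 + 1" using assms(2) by (simp add: chains_def)
  moreover have "finite G" using GK assms(1) by (meson Union_upper finite_subset)
  ultimately have "int (card G) = d + 1" using w(1) by simp
  then show "G \<in> K \<and> int (card G) = d + 1" using GK by simp
qed

lemma bd_subcomplex:
  assumes "K \<subseteq> L" "subset_closed K" "finite (\<Union>L)" "c \<in> chains K d"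
  shows "bd L c = bd K (c :: nat set \<Rightarrow> 'k::field)"
proof
  fix G
  show "bd L c G = bd K c G"
  proof (cases "G \<in> K")
    case True
    have "(\<Sum>w\<in>\<Union>L - G. incidence_sign G w * c (insert w G)) =
          (\<Sum>w\<in>\<Union>K - G. incidence_sign G w * (c (insert w G) :: 'k))"
    proof (rule sum.mono_neutral_right)
      show "\<forall>w\<in>(\<Union>L - G) - (\<Union>K - G). incidence_sign G w * c (insert w G) = 0"
        using chains_vanish[OF assms(4)] by auto
    qed (use assms(1,3) in auto)
    then show ?thesis using True assms(1) by (auto simp: bd_incidence)
  next
    case False
    then show ?thesis using assms(1) chains_insert_vanish[OF assms(2,4)] by (auto simp: bd_incidence)
  qed
qed

text \<open>Induction rather than the swap symmetry of the index pairs, which would only give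
  2 s = 0 and so fail in characteristic 2.\<close>
lemma sum_offdiag_antisym_eq_0:
  assumes "finite S"
    and "\<And>w u. w \<in> S \<Longrightarrow> u \<in> S \<Longrightarrow> w \<noteq> u \<Longrightarrow> g w u + g u w = (0::'a::comm_ring)"
  shows "(\<Sum>w\<in>S. \<Sum>u\<in>S - {w}. g w u) = 0"
  using assms
proof (induction S rule: finite_induct)
  case empty
  show ?case by simp
next
  case (insert x S)
  have IH: "(\<Sum>w\<in>S. \<Sum>u\<in>S - {w}. g w u) = 0" using insert by auto
  have "(\<Sum>w\<in>insert x S. \<Sum>u\<in>insert x S - {w}. g w u)
      = (\<Sum>u\<in>S. g x u) + (\<Sum>w\<in>S. \<Sum>u\<in>insert x S - {w}. g w u)"
    using insert by (simp add: insert_Diff_if)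
  also have "(\<Sum>w\<in>S. \<Sum>u\<in>insert x S - {w}. g w u) = (\<Sum>w\<in>S. g w x + (\<Sum>u\<in>S - {w}. g w u))"
  proof (rule sum.cong)
    fix w assume "w \<in> S"
    then have "insert x S - {w} = insert x (S - {w})" "x \<notin> S - {w}" using insert by auto
    then show "(\<Sum>u\<in>insert x S - {w}. g w u) = g w x + (\<Sum>u\<in>S - {w}. g w u)"
      using insert by simp
  qed simp
  also have "\<dots> = (\<Sum>w\<in>S. g w x)" using IH by (simp add: sum.distrib)
  finally have "(\<Sum>w\<in>insert x S. \<Sum>u\<in>insert x S - {w}. g w u) = (\<Sum>u\<in>S. g x u + g u x)"
    by (simp add: sum.distrib)
  also have "\<dots> = 0" by (rule sum.neutral) (use insert in auto)
  finally show ?case .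
qed

lemma bd_bd_eq_0:
  assumes "subset_closed K" "finite (\<Union>K)" "c \<in> chains K d"
  shows "bd K (bd K (c :: nat set \<Rightarrow> 'k::field)) = (\<lambda>_. 0)"
proof
  fix G
  show "bd K (bd K c) G = 0"
  proof (cases "G \<in> K")
    case False
    then show ?thesis by (simp add: bd_incidence)
  next
    case True
    define S where "S = \<Union>K - G"
    have bd_insert: "bd K c (insert w G) =
        (\<Sum>u\<in>S - {w}. incidence_sign (insert w G) u * c (insert u (insert w G)))"
      if "w \<in> S" for w
    proof (cases "insert w G \<in> K")
      case True
      have "\<Union>K - insert w G = S - {w}" by (auto simp: S_def)
      then show ?thesis using True by (simp add: bd_incidence)
    next
      case False
      then show ?thesis using chains_insert_vanish[OF assms(1,3)] by (simp add: bd_incidence)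
    qed
    have "bd K (bd K c) G = (\<Sum>w\<in>S. incidence_sign G w * bd K c (insert w G))"
      using True by (simp add: bd_incidence S_def)
    also have "\<dots> = (\<Sum>w\<in>S. \<Sum>u\<in>S - {w}.
        incidence_sign G w * incidence_sign (insert w G) u * c (insert u (insert w G)))"
      by (rule sum.cong) (simp_all add: bd_insert sum_distrib_left mult.assoc)
    also have "\<dots> = 0"
    proof (rule sum_offdiag_antisym_eq_0)
      show "finite S" using assms(2) by (simp add: S_def)
      fix w u assume wu: "w \<in> S" "u \<in> S" "w \<noteq> u"
      then have "w \<notin> G" "u \<notin> G" by (auto simp: S_def)
      moreover have "insert w (insert u G) = insert u (insert w G)" by auto
      ultimately show "incidence_sign G w * incidence_sign (insert w G) u * c (insert u (insert w G)) +
          incidence_sign G u * incidence_sign (insert u G) w * c (insert w (insert u G)) = 0"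
        using wu by (cases "w < u") (auto simp: incidence_sign_insert)
    qed
    finally show ?thesis .
  qed
qed

lemma boundaries_zero: "(\<lambda>F. 0) \<in> boundaries K d"
  unfolding boundaries_def by (rule image_eqI[of _ _ "\<lambda>F. 0"]) (simp_all add: bd_zero chains_zero)

lemma boundaries_add:
  assumes "x \<in> boundaries K d" "y \<in> boundaries K d"
  shows "(\<lambda>F. x F + y F) \<in> boundaries K d"
proof -
  obtain p q where "p \<in> chains K (d + 1)" "q \<in> chains K (d + 1)" "x = bd K p" "y = bd K q"
    using assms by (auto simp: boundaries_def)
  then show ?thesis unfolding boundaries_def
    by (intro image_eqI[of _ _ "\<lambda>F. p F + q F"]) (simp_all add: bd_add chains_add)
qed

lemma boundaries_scale:
  assumes "x \<in> boundaries K d"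
  shows "(\<lambda>F. s * x F) \<in> boundaries K d"
proof -
  obtain p where "p \<in> chains K (d + 1)" "x = bd K p"
    using assms by (auto simp: boundaries_def)
  then show ?thesis unfolding boundaries_def
    by (intro image_eqI[of _ _ "\<lambda>F. s * p F"]) (simp_all add: bd_scale chains_scale)
qed

lemma boundaries_uminus: "x \<in> boundaries K d \<Longrightarrow> (\<lambda>F. - x F) \<in> boundaries K d"
  using boundaries_scale[of x K d "-1"] by simp

lemma cycles_add: "x \<in> cycles K d \<Longrightarrow> y \<in> cycles K d \<Longrightarrow> (\<lambda>F. x F + y F) \<in> cycles K d"
  by (simp add: cycles_def chains_add bd_add)

lemma cycles_diff: "x \<in> cycles K d \<Longrightarrow> y \<in> cycles K d \<Longrightarrow> (\<lambda>F. x F - y F) \<in> cycles K d"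
  by (simp add: cycles_def chains_diff bd_diff)

lemma cycles_scale: "x \<in> cycles K d \<Longrightarrow> (\<lambda>F. s * x F) \<in> cycles K d"
  by (simp add: cycles_def chains_scale bd_scale)

lemma hclass_in_reduced_homology: "z \<in> cycles K d \<Longrightarrow> hclass K d z \<in> reduced_homology K d"
  by (simp add: reduced_homology_def)

lemma hclass_eq_iff: "hclass K d x = hclass K d y \<longleftrightarrow> (\<lambda>F. x F - y F) \<in> boundaries K d"
proof
  assume eq: "hclass K d x = hclass K d y"
  have "x \<in> hclass K d x" unfolding hclass_def
    by (rule image_eqI[of _ _ "\<lambda>F. 0"]) (simp_all add: boundaries_zero)
  then obtain b where "b \<in> boundaries K d" "x = (\<lambda>F. y F + b F)"
    using eq by (auto simp: hclass_def)
  then show "(\<lambda>F. x F - y F) \<in> boundaries K d" by simp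
next
  have subset: "hclass K d p \<subseteq> hclass K d q" if "(\<lambda>F. p F - q F) \<in> boundaries K d" for p q
  proof
    fix t assume "t \<in> hclass K d p"
    then obtain b where b: "b \<in> boundaries K d" "t = (\<lambda>F. p F + b F)" by (auto simp: hclass_def)
    show "t \<in> hclass K d q" unfolding hclass_def
      by (rule rev_image_eqI[OF boundaries_add[OF that b(1)]]) (simp add: b(2))
  qed
  assume "(\<lambda>F. x F - y F) \<in> boundaries K d"
  moreover from boundaries_uminus[OF this] have "(\<lambda>F. y F - x F) \<in> boundaries K d" by simp
  ultimately show "hclass K d x = hclass K d y" using subset by blast
qed

section \<open>Isomorphisms of reduced homology\<close>

definition homology_linear ::
  "((nat set \<Rightarrow> 'k::field) set \<Rightarrow> (nat set \<Rightarrow> 'k) set) \<Rightarrow> nat set set \<Rightarrow> int \<Rightarrow> nat set set \<Rightarrow> int \<Rightarrow> bool"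
where
  "homology_linear f K d L e \<longleftrightarrow>
    (\<forall>z w z' w'. z \<in> cycles K d \<longrightarrow> w \<in> cycles K d \<longrightarrow>
        z' \<in> cycles L e \<longrightarrow> w' \<in> cycles L e \<longrightarrow>
        f (hclass K d z) = hclass L e z' \<longrightarrow>
        f (hclass K d w) = hclass L e w' \<longrightarrow>
        f (hclass K d (\<lambda>F. z F + w F)) = hclass L e (\<lambda>F. z' F + w' F)) \<and>
    (\<forall>a z z'. z \<in> cycles K d \<longrightarrow> z' \<in> cycles L e \<longrightarrow>
        f (hclass K d z) = hclass L e z' \<longrightarrow>
        f (hclass K d (\<lambda>F. a * z F)) = hclass L e (\<lambda>F. a * z' F))"

lemma homology_iso_iff:
  "homology_iso TYPE('k::field) K d L e \<longleftrightarrow>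
    (\<exists>f :: (nat set \<Rightarrow> 'k) set \<Rightarrow> (nat set \<Rightarrow> 'k) set.
      bij_betw f (reduced_homology K d) (reduced_homology L e) \<and> homology_linear f K d L e)"
  unfolding homology_iso_def homology_linear_def by (rule refl)

lemma homology_linearI:
  assumes "\<And>z w z' w'. z \<in> cycles K d \<Longrightarrow> w \<in> cycles K d \<Longrightarrow>
      z' \<in> cycles L e \<Longrightarrow> w' \<in> cycles L e \<Longrightarrow>
      f (hclass K d z) = hclass L e z' \<Longrightarrow> f (hclass K d w) = hclass L e w' \<Longrightarrow>
      f (hclass K d (\<lambda>F. z F + w F)) = hclass L e (\<lambda>F. z' F + w' F)"
    and "\<And>a z z'. z \<in> cycles K d \<Longrightarrow> z' \<in> cycles L e \<Longrightarrow>
      f (hclass K d z) = hclass L e z' \<Longrightarrow>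
      f (hclass K d (\<lambda>F. a * z F)) = hclass L e (\<lambda>F. a * z' F)"
  shows "homology_linear f K d L e"
  using assms unfolding homology_linear_def by blast

lemma homology_linear_addD:
  "homology_linear f K d L e \<Longrightarrow> z \<in> cycles K d \<Longrightarrow> w \<in> cycles K d \<Longrightarrow>
    z' \<in> cycles L e \<Longrightarrow> w' \<in> cycles L e \<Longrightarrow>
    f (hclass K d z) = hclass L e z' \<Longrightarrow> f (hclass K d w) = hclass L e w' \<Longrightarrow>
    f (hclass K d (\<lambda>F. z F + w F)) = hclass L e (\<lambda>F. z' F + w' F)"
  unfolding homology_linear_def by blast

lemma homology_linear_scaleD:
  "homology_linear f K d L e \<Longrightarrow> z \<in> cycles K d \<Longrightarrow> z' \<in> cycles L e \<Longrightarrow>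
    f (hclass K d z) = hclass L e z' \<Longrightarrow>
    f (hclass K d (\<lambda>F. a * z F)) = hclass L e (\<lambda>F. a * z' F)"
  unfolding homology_linear_def by blast

lemma homology_linear_comp:
  assumes "f ` reduced_homology K1 d1 \<subseteq> reduced_homology K2 d2"
    and f: "homology_linear f K1 d1 K2 d2" and g: "homology_linear g K2 d2 K3 d3"
  shows "homology_linear (g \<circ> f) K1 d1 K3 d3"
proof -
  have image: "\<exists>z'\<in>cycles K2 d2. f (hclass K1 d1 z) = hclass K2 d2 z'" if "z \<in> cycles K1 d1" for z
  proof -
    have "f (hclass K1 d1 z) \<in> hclass K2 d2 ` cycles K2 d2"
      using assms(1) hclass_in_reduced_homology[OF that] unfolding reduced_homology_def by blast
    then show ?thesis by blast
  qed
  show ?thesis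
  proof (rule homology_linearI)
    fix z w z'' w''
    assume zw: "z \<in> cycles K1 d1" "w \<in> cycles K1 d1" "z'' \<in> cycles K3 d3" "w'' \<in> cycles K3 d3"
      and gf: "(g \<circ> f) (hclass K1 d1 z) = hclass K3 d3 z''" "(g \<circ> f) (hclass K1 d1 w) = hclass K3 d3 w''"
    obtain z' w' where z': "z' \<in> cycles K2 d2" "f (hclass K1 d1 z) = hclass K2 d2 z'"
      and w': "w' \<in> cycles K2 d2" "f (hclass K1 d1 w) = hclass K2 d2 w'"
      using image zw(1,2) by meson
    show "(g \<circ> f) (hclass K1 d1 (\<lambda>F. z F + w F)) = hclass K3 d3 (\<lambda>F. z'' F + w'' F)"
      using homology_linear_addD[OF f zw(1,2) z'(1) w'(1) z'(2) w'(2)]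
        homology_linear_addD[OF g z'(1) w'(1) zw(3,4)] gf z'(2) w'(2) by simp
  next
    fix a z z''
    assume z: "z \<in> cycles K1 d1" "z'' \<in> cycles K3 d3"
      and gf: "(g \<circ> f) (hclass K1 d1 z) = hclass K3 d3 z''"
    obtain z' where z': "z' \<in> cycles K2 d2" "f (hclass K1 d1 z) = hclass K2 d2 z'"
      using image z(1) by meson
    show "(g \<circ> f) (hclass K1 d1 (\<lambda>F. a * z F)) = hclass K3 d3 (\<lambda>F. a * z'' F)"
      using homology_linear_scaleD[OF f z(1) z'] homology_linear_scaleD[OF g z'(1) z(2)] gf z'(2)
      by simp
  qed
qed

lemma homology_linear_inv:
  assumes bij: "bij_betw f (reduced_homology K1 d1) (reduced_homology K2 d2)"
    and f: "homology_linear f K1 d1 K2 d2"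
  shows "homology_linear (inv_into (reduced_homology K1 d1) f) K2 d2 K1 d1"
proof -
  let ?g = "inv_into (reduced_homology K1 d1) f"
  have g_eq: "?g (hclass K2 d2 z) = hclass K1 d1 z' \<longleftrightarrow> f (hclass K1 d1 z') = hclass K2 d2 z"
    if "z \<in> cycles K2 d2" "z' \<in> cycles K1 d1" for z z'
    using bij_betw_inv_into_left[OF bij hclass_in_reduced_homology[OF that(2)]]
      bij_betw_inv_into_right[OF bij hclass_in_reduced_homology[OF that(1)]] by auto
  show ?thesis
  proof (rule homology_linearI)
    fix z w z' w'
    assume zw: "z \<in> cycles K2 d2" "w \<in> cycles K2 d2" "z' \<in> cycles K1 d1" "w' \<in> cycles K1 d1"
      and "?g (hclass K2 d2 z) = hclass K1 d1 z'" "?g (hclass K2 d2 w) = hclass K1 d1 w'"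
    then have "f (hclass K1 d1 z') = hclass K2 d2 z" "f (hclass K1 d1 w') = hclass K2 d2 w"
      using g_eq by blast+
    then show "?g (hclass K2 d2 (\<lambda>F. z F + w F)) = hclass K1 d1 (\<lambda>F. z' F + w' F)"
      unfolding g_eq[OF cycles_add[OF zw(1,2)] cycles_add[OF zw(3,4)]]
      by (rule homology_linear_addD[OF f zw(3,4,1,2)])
  next
    fix a z z'
    assume z: "z \<in> cycles K2 d2" "z' \<in> cycles K1 d1" and "?g (hclass K2 d2 z) = hclass K1 d1 z'"
    then have "f (hclass K1 d1 z') = hclass K2 d2 z" using g_eq by blast
    then show "?g (hclass K2 d2 (\<lambda>F. a * z F)) = hclass K1 d1 (\<lambda>F. a * z' F)"
      unfolding g_eq[OF cycles_scale[OF z(1)] cycles_scale[OF z(2)]]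
      by (rule homology_linear_scaleD[OF f z(2,1)])
  qed
qed

lemma homology_iso_trans:
  assumes "homology_iso TYPE('k::field) K1 d1 K2 d2" "homology_iso TYPE('k) K2 d2 K3 d3"
  shows "homology_iso TYPE('k) K1 d1 K3 d3"
proof -
  obtain f g :: "(nat set \<Rightarrow> 'k) set \<Rightarrow> (nat set \<Rightarrow> 'k) set"
    where f: "bij_betw f (reduced_homology K1 d1) (reduced_homology K2 d2)" "homology_linear f K1 d1 K2 d2"
      and g: "bij_betw g (reduced_homology K2 d2) (reduced_homology K3 d3)" "homology_linear g K2 d2 K3 d3"
    using assms unfolding homology_iso_iff by blast
  have "homology_linear (g \<circ> f) K1 d1 K3 d3"
    using f g by (intro homology_linear_comp) (auto simp: bij_betw_def)
  then show ?thesis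
    unfolding homology_iso_iff using bij_betw_trans[OF f(1) g(1)] by blast
qed

lemma homology_iso_sym:
  assumes "homology_iso TYPE('k::field) K1 d1 K2 d2"
  shows "homology_iso TYPE('k) K2 d2 K1 d1"
  using assms unfolding homology_iso_iff by (meson bij_betw_inv_into homology_linear_inv)

definition induced_map :: "nat set set \<Rightarrow> int \<Rightarrow> (nat set \<Rightarrow> 'k::field) set \<Rightarrow> (nat set \<Rightarrow> 'k) set"
  where "induced_map L d X = \<Union> (hclass L d ` X)"

lemma induced_map_hclass:
  assumes "boundaries K d \<subseteq> (boundaries L d :: (nat set \<Rightarrow> 'k::field) set)"
  shows "induced_map L d (hclass K d z) = hclass L d (z :: nat set \<Rightarrow> 'k)"
proof -
  have "hclass L d (\<lambda>F. z F + b F) = hclass L d z" if "b \<in> boundaries K d" for b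
    using assms that by (auto simp: hclass_eq_iff)
  moreover have "boundaries K d \<noteq> {}" using boundaries_zero by blast
  ultimately have "(\<lambda>b. hclass L d (\<lambda>F. z F + b F)) ` boundaries K d = {hclass L d z}" by auto
  then show ?thesis unfolding induced_map_def hclass_def[of K] image_image by simp
qed

lemma homology_linear_induced_map:
  assumes "boundaries K d \<subseteq> (boundaries L d :: (nat set \<Rightarrow> 'k::field) set)"
  shows "homology_linear (induced_map L d :: (nat set \<Rightarrow> 'k) set \<Rightarrow> _) K d L d"
proof -
  have eq_iff: "induced_map L d (hclass K d z) = hclass L d z' \<longleftrightarrow>
      (\<lambda>F. z F - z' F) \<in> boundaries L d" for z z' :: "nat set \<Rightarrow> 'k"
    by (simp add: induced_map_hclass[OF assms] hclass_eq_iff)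
  show ?thesis
  proof (rule homology_linearI)
    fix z w z' w' :: "nat set \<Rightarrow> 'k"
    assume "induced_map L d (hclass K d z) = hclass L d z'"
      "induced_map L d (hclass K d w) = hclass L d w'"
    then have "(\<lambda>F. (z F - z' F) + (w F - w' F)) \<in> boundaries L d"
      by (intro boundaries_add) (simp_all add: eq_iff)
    then show "induced_map L d (hclass K d (\<lambda>F. z F + w F)) = hclass L d (\<lambda>F. z' F + w' F)"
      by (simp add: eq_iff algebra_simps)
  next
    fix a and z z' :: "nat set \<Rightarrow> 'k"
    assume "induced_map L d (hclass K d z) = hclass L d z'"
    then have "(\<lambda>F. a * (z F - z' F)) \<in> boundaries L d"
      by (intro boundaries_scale) (simp add: eq_iff)
    then show "induced_map L d (hclass K d (\<lambda>F. a * z F)) = hclass L d (\<lambda>F. a * z' F)"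
      by (simp add: eq_iff algebra_simps)
  qed
qed

lemma homology_iso_by_retraction:
  fixes r :: "(nat set \<Rightarrow> 'k::field) \<Rightarrow> (nat set \<Rightarrow> 'k)"
  assumes cycles: "cycles K d \<subseteq> (cycles L d :: (nat set \<Rightarrow> 'k) set)"
    and boundaries: "boundaries K d \<subseteq> (boundaries L d :: (nat set \<Rightarrow> 'k) set)"
    and r_cycles: "\<And>z. z \<in> cycles L d \<Longrightarrow> r z \<in> cycles K d"
    and r_boundaries: "\<And>b. b \<in> boundaries L d \<Longrightarrow> r b \<in> boundaries K d"
    and r_id: "\<And>z. z \<in> cycles K d \<Longrightarrow> r z = z"
    and r_homotopic: "\<And>z. z \<in> cycles L d \<Longrightarrow> (\<lambda>F. r z F - z F) \<in> boundaries L d"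
  shows "homology_iso TYPE('k) K d L d"
proof -
  let ?f = "induced_map L d :: (nat set \<Rightarrow> 'k) set \<Rightarrow> _"
  note f_hclass = induced_map_hclass[OF boundaries]
  have "inj_on ?f (reduced_homology K d)"
  proof (rule inj_onI)
    fix X Y assume "X \<in> reduced_homology K d" "Y \<in> reduced_homology K d" and fXY: "?f X = ?f Y"
    then obtain z w where zw: "z \<in> cycles K d" "w \<in> cycles K d" "X = hclass K d z" "Y = hclass K d w"
      by (auto simp: reduced_homology_def)
    with fXY have "(\<lambda>F. z F - w F) \<in> boundaries L d" by (simp add: f_hclass hclass_eq_iff)
    then have "r (\<lambda>F. z F - w F) \<in> boundaries K d" by (intro r_boundaries)
    then show "X = Y" using r_id[OF cycles_diff[OF zw(1,2)]] zw(3,4) by (simp add: hclass_eq_iff)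
  qed
  moreover have "?f ` reduced_homology K d = reduced_homology L d"
  proof
    show "?f ` reduced_homology K d \<subseteq> reduced_homology L d"
      using cycles by (auto simp: reduced_homology_def f_hclass)
  next
    show "reduced_homology L d \<subseteq> ?f ` reduced_homology K d"
    proof
      fix Y :: "(nat set \<Rightarrow> 'k) set" assume "Y \<in> reduced_homology L d"
      then obtain z where z: "z \<in> cycles L d" "Y = hclass L d z" by (auto simp: reduced_homology_def)
      then have "?f (hclass K d (r z)) = Y" using r_homotopic by (simp add: f_hclass hclass_eq_iff)
      then show "Y \<in> ?f ` reduced_homology K d"
        using hclass_in_reduced_homology[OF r_cycles[OF z(1)]] by blast
    qed
  qed
  ultimately show ?thesis
    unfolding homology_iso_iff bij_betw_def using homology_linear_induced_map[OF boundaries] by blast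
qed

lemma homology_iso_refl: "homology_iso TYPE('k::field) K d K d"
  by (rule homology_iso_by_retraction[where r = id]) (simp_all add: boundaries_zero)

section \<open>Deleting a vertex whose star is a cone\<close>

definition deletion :: "'a set set \<Rightarrow> 'a \<Rightarrow> 'a set set" where
  "deletion L v = {G \<in> L. v \<notin> G}"

lemma deletion_subset: "deletion L v \<subseteq> L"
  by (auto simp: deletion_def)

lemma subset_closed_deletion: "subset_closed L \<Longrightarrow> subset_closed (deletion L v)"
  by (auto simp: subset_closed_def deletion_def)

locale coned_star =
  fixes L :: "nat set set" and a v :: nat
  assumes closed: "subset_closed L"
    and finite_vertices: "finite (\<Union>L)"
    and apex_neq: "a \<noteq> v"
    and insert_apex: "\<And>G. G \<in> L \<Longrightarrow> v \<in> G \<Longrightarrow> insert a G \<in> L"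
begin

definition cone_op :: "(nat set \<Rightarrow> 'k::field) \<Rightarrow> nat set \<Rightarrow> 'k" where
  "cone_op c G = (if a \<in> G \<and> v \<in> G then incidence_sign (G - {a}) a * c (G - {a}) else 0)"

lemma finite_face: "G \<in> L \<Longrightarrow> finite G"
  using finite_vertices by (meson Union_upper finite_subset)

lemma cone_op_homotopy_apex_notin:
  assumes "c \<in> chains L e" "v \<in> G" "a \<notin> G"
  shows "bd L (cone_op c) G + cone_op (bd L c) G = (c G :: 'k::field)"
proof (cases "G \<in> L")
  case False
  then show ?thesis using assms(3) chains_vanish[OF assms(1)] by (simp add: bd_incidence cone_op_def)
next
  case True
  have a_in: "a \<in> \<Union>L - G" using insert_apex[OF True assms(2)] assms(3) by auto
  have "bd L (cone_op c) G = (\<Sum>w\<in>\<Union>L - G. incidence_sign G w * cone_op c (insert w G))"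
    using True by (simp add: bd_incidence)
  also have "\<dots> = (\<Sum>w\<in>\<Union>L - G. if w = a then c G else 0)"
  proof (rule sum.cong)
    fix w assume "w \<in> \<Union>L - G"
    have "insert a G - {a} = G" using assms(3) by auto
    then show "incidence_sign G w * cone_op c (insert w G) = (if w = a then c G else 0)"
      using assms(2,3) by (simp add: cone_op_def mult.assoc[symmetric] incidence_sign_square)
  qed simp
  also have "\<dots> = c G" using a_in finite_vertices by simp
  finally show ?thesis using assms(3) by (simp add: cone_op_def)
qed

lemma cone_op_homotopy_apex_in:
  assumes "c \<in> chains L e" "v \<in> G" "a \<in> G"
  shows "bd L (cone_op c) G + cone_op (bd L c) G = (c G :: 'k::field)"
proof -
  define H where "H = G - {a}"
  have G: "G = insert a H" "a \<notin> H" "v \<in> H" using assms(2,3) apex_neq by (auto simp: H_def)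
  have cone_op_bd: "cone_op (bd L c) G = incidence_sign H a * bd L c H"
    using assms(2,3) by (simp add: cone_op_def H_def)
  show ?thesis
  proof (cases "G \<in> L")
    case False
    moreover have "H \<notin> L" using insert_apex[of H] G False by auto
    ultimately show ?thesis using cone_op_bd chains_vanish[OF assms(1)] by (simp add: bd_incidence)
  next
    case True
    have H_in: "H \<in> L" using closed True by (auto simp: subset_closed_def H_def)
    have vertices: "\<Union>L - H = insert a (\<Union>L - G)" "a \<notin> \<Union>L - G" using G True by auto
    have "bd L c H = (\<Sum>w\<in>insert a (\<Union>L - G). incidence_sign H w * c (insert w H))"
      using H_in vertices(1) by (simp add: bd_incidence)
    also have "\<dots> = incidence_sign H a * c G + (\<Sum>w\<in>\<Union>L - G. incidence_sign H w * c (insert w H))"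
      using finite_vertices vertices(2) G(1) by simp
    finally have "cone_op (bd L c) G =
        c G + (\<Sum>w\<in>\<Union>L - G. incidence_sign H a * incidence_sign H w * c (insert w H))"
      using cone_op_bd
      by (simp add: distrib_left sum_distrib_left mult.assoc[symmetric] incidence_sign_square)
    moreover have "bd L (cone_op c) G =
        (\<Sum>w\<in>\<Union>L - G. - (incidence_sign H a * incidence_sign H w * c (insert w H)))"
      unfolding bd_incidence using True
    proof (simp, intro sum.cong)
      fix w assume "w \<in> \<Union>L - G"
      then have w: "w \<noteq> a" "w \<notin> H" "insert w G - {a} = insert w H" using G by auto
      then show "incidence_sign G w * cone_op c (insert w G) =
          - (incidence_sign H a * incidence_sign H w * c (insert w H))"
        using assms(2,3) G by (cases "w < a") (auto simp: cone_op_def incidence_sign_insert)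
    qed simp
    ultimately show ?thesis by (simp add: sum_negf)
  qed
qed

lemma cone_op_homotopy:
  "c \<in> chains L e \<Longrightarrow> v \<in> G \<Longrightarrow> bd L (cone_op c) G + cone_op (bd L c) G = (c G :: 'k::field)"
  using cone_op_homotopy_apex_in cone_op_homotopy_apex_notin by blast

lemma cone_op_zero: "cone_op (\<lambda>_. 0) = (\<lambda>_. 0 :: 'k::field)"
  by (simp add: cone_op_def fun_eq_iff)

lemma cone_op_chains:
  assumes "c \<in> chains L e"
  shows "cone_op c \<in> chains L (e + 1)"
  unfolding chains_def
proof (intro CollectI allI impI)
  fix G assume "cone_op c G \<noteq> 0"
  then have G: "a \<in> G" "v \<in> G" "c (G - {a}) \<noteq> 0" by (auto simp: cone_op_def split: if_splits)
  then have H: "G - {a} \<in> L" "int (card (G - {a})) = e + 1" using assms by (auto simp: chains_def)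
  have "insert a (G - {a}) \<in> L" using insert_apex[OF H(1)] G apex_neq by auto
  then have "G \<in> L" using G(1) by (simp add: insert_absorb)
  moreover have "card G = Suc (card (G - {a}))" using finite_face[OF \<open>G \<in> L\<close>] G(1) by (rule card.remove)
  ultimately show "G \<in> L \<and> int (card G) = e + 1 + 1" using H(2) by simp
qed

lemma cone_op_deletion: "c \<in> chains (deletion L v) e \<Longrightarrow> cone_op c = (\<lambda>_. 0)"
  using apex_neq by (auto simp: cone_op_def fun_eq_iff chains_def deletion_def)

definition retraction :: "(nat set \<Rightarrow> 'k::field) \<Rightarrow> nat set \<Rightarrow> 'k" where
  "retraction c G = c G - bd L (cone_op c) G - cone_op (bd L c) G"

lemma bd_deletion: "c \<in> chains (deletion L v) e \<Longrightarrow> bd L c = bd (deletion L v) c"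
  using closed by (intro bd_subcomplex deletion_subset subset_closed_deletion finite_vertices)

lemma bd_chains_L: "c \<in> chains L e \<Longrightarrow> bd L c \<in> chains L (e - 1)"
  using bd_chains[OF finite_vertices, of c "e - 1"] by simp

lemma retraction_chains:
  assumes "c \<in> chains L e"
  shows "retraction c \<in> chains (deletion L v) e"
proof -
  have "bd L (cone_op c) \<in> chains L e" "cone_op (bd L c) \<in> chains L e"
    using bd_chains_L[OF cone_op_chains[OF assms]] cone_op_chains[OF bd_chains_L[OF assms]] by simp_all
  then have in_L: "retraction c \<in> chains L e"
    unfolding retraction_def[abs_def] by (intro chains_diff assms)
  show ?thesis
    unfolding chains_def
  proof (intro CollectI allI impI)
    fix G assume nz: "retraction c G \<noteq> 0"
    then have "G \<in> L" "int (card G) = e + 1" using in_L by (auto simp: chains_def)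
    moreover have "v \<notin> G"
      using nz cone_op_homotopy[OF assms] by (auto simp: retraction_def algebra_simps)
    ultimately show "G \<in> deletion L v \<and> int (card G) = e + 1" by (simp add: deletion_def)
  qed
qed

lemma retraction_id:
  assumes "c \<in> chains (deletion L v) e"
  shows "retraction c = c"
proof -
  have "bd (deletion L v) c \<in> chains (deletion L v) (e - 1)"
    using bd_chains[OF finite_subset[OF Union_mono[OF deletion_subset[of L v]] finite_vertices], of c "e - 1"]
      assms by simp
  then have "cone_op (bd L c) = (\<lambda>_. 0)" using bd_deletion[OF assms] cone_op_deletion by simp
  then show ?thesis using cone_op_deletion[OF assms] by (intro ext) (simp add: retraction_def bd_zero)
qed

lemma bd_retraction:
  assumes "c \<in> chains L e"
  shows "bd L (retraction c) = retraction (bd L c)"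
proof -
  have "bd L (bd L c) = (\<lambda>_. 0)" "bd L (bd L (cone_op c)) = (\<lambda>_. 0)"
    using bd_bd_eq_0[OF closed finite_vertices] assms cone_op_chains by blast+
  then show ?thesis unfolding retraction_def[abs_def] bd_diff by (simp add: cone_op_zero)
qed

lemma retraction_homotopic:
  assumes "z \<in> cycles L d"
  shows "(\<lambda>F. retraction z F - z F) \<in> boundaries L d"
proof -
  have z: "z \<in> chains L d" "bd L z = (\<lambda>_. 0)" using assms by (auto simp: cycles_def)
  have "(\<lambda>F. retraction z F - z F) = bd L (\<lambda>F. - cone_op z F)"
    by (simp add: retraction_def z(2) cone_op_zero bd_uminus)
  moreover have "(\<lambda>F. - cone_op z F) \<in> chains L (d + 1)"
    by (intro chains_uminus cone_op_chains z(1))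
  ultimately show ?thesis by (simp add: boundaries_def)
qed

theorem homology_iso_deletion: "homology_iso TYPE('k::field) (deletion L v) d L d"
proof (rule homology_iso_by_retraction[where r = retraction])
  show "cycles (deletion L v) d \<subseteq> (cycles L d :: (nat set \<Rightarrow> 'k) set)"
    using chains_mono[OF deletion_subset[of L v]] by (auto simp: cycles_def bd_deletion)
  show "boundaries (deletion L v) d \<subseteq> (boundaries L d :: (nat set \<Rightarrow> 'k) set)"
    using chains_mono[OF deletion_subset[of L v]] by (auto simp: boundaries_def bd_deletion[symmetric])
  show "retraction z \<in> cycles (deletion L v) d" if "z \<in> cycles L d" for z :: "nat set \<Rightarrow> 'k"
  proof -
    have z: "z \<in> chains L d" "bd L z = (\<lambda>_. 0)" using that by (auto simp: cycles_def)
    have r: "retraction z \<in> chains (deletion L v) d" by (rule retraction_chains[OF z(1)])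
    have "bd (deletion L v) (retraction z) = retraction (bd L z)"
      using bd_deletion[OF r] bd_retraction[OF z(1)] by simp
    also have "\<dots> = (\<lambda>_. 0)" using z(2) retraction_id[OF chains_zero] by simp
    finally show ?thesis using r by (simp add: cycles_def)
  qed
  show "retraction b \<in> boundaries (deletion L v) d" if b: "b \<in> boundaries L d" for b :: "nat set \<Rightarrow> 'k"
  proof -
    obtain c where c: "c \<in> chains L (d + 1)" "b = bd L c" using b by (auto simp: boundaries_def)
    have r: "retraction c \<in> chains (deletion L v) (d + 1)" by (rule retraction_chains[OF c(1)])
    have "retraction b = bd (deletion L v) (retraction c)"
      using bd_retraction[OF c(1)] bd_deletion[OF r] c(2) by simp
    then show ?thesis using r by (simp add: boundaries_def)
  qed
  show "retraction z = z" if "z \<in> cycles (deletion L v) d" for z :: "nat set \<Rightarrow> 'k"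
    using that by (intro retraction_id) (auto simp: cycles_def)
qed (rule retraction_homotopic)

end

section \<open>Unions of two cones\<close>

lemma subset_closed_cone: "subset_closed (cone X \<Delta>)"
  by (auto simp: subset_closed_def cone_def)

lemma Union_cone_subset: "\<Union>(cone X \<Delta>) \<subseteq> X \<union> \<Union>\<Delta>"
  by (auto simp: cone_def facets_def)

lemma deletion_cone_insert:
  assumes "v \<notin> X \<union> Y \<union> \<Union>\<Delta>1 \<union> \<Union>\<Delta>2"
  shows "deletion (cone (insert v X) \<Delta>1 \<union> cone Y \<Delta>2) v = cone X \<Delta>1 \<union> cone Y \<Delta>2"
  using assms by (auto simp: deletion_def cone_def facets_def)

lemma homology_iso_cone_insert:
  assumes "finite X" "finite Y" "finite (\<Union>\<Delta>1)" "finite (\<Union>\<Delta>2)" "X \<noteq> {}"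
    and v: "v \<notin> X \<union> Y \<union> \<Union>\<Delta>1 \<union> \<Union>\<Delta>2"
  shows "homology_iso TYPE('k::field)
    (cone X \<Delta>1 \<union> cone Y \<Delta>2) d (cone (insert v X) \<Delta>1 \<union> cone Y \<Delta>2) d"
proof -
  obtain a where a: "a \<in> X" using assms(5) by blast
  interpret coned_star "cone (insert v X) \<Delta>1 \<union> cone Y \<Delta>2" a v
  proof
    show "subset_closed (cone (insert v X) \<Delta>1 \<union> cone Y \<Delta>2)"
      by (intro subset_closed_Un subset_closed_cone)
    have "\<Union>(cone (insert v X) \<Delta>1 \<union> cone Y \<Delta>2) \<subseteq> (insert v X \<union> \<Union>\<Delta>1) \<union> (Y \<union> \<Union>\<Delta>2)"
      using Union_cone_subset[of "insert v X" \<Delta>1] Union_cone_subset[of Y \<Delta>2] by blast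
    then show "finite (\<Union>(cone (insert v X) \<Delta>1 \<union> cone Y \<Delta>2))"
      using assms(1-4) by (meson finite_Un finite_insert finite_subset)
    show "a \<noteq> v" using a v by auto
    fix G assume "G \<in> cone (insert v X) \<Delta>1 \<union> cone Y \<Delta>2" "v \<in> G"
    then have "G \<in> cone (insert v X) \<Delta>1" using v by (auto simp: cone_def facets_def)
    then show "insert a G \<in> cone (insert v X) \<Delta>1 \<union> cone Y \<Delta>2" using a by (auto simp: cone_def)
  qed
  show ?thesis using homology_iso_deletion unfolding deletion_cone_insert[OF v] .
qed

lemma homology_iso_cone_Un:
  assumes "finite S" "finite X" "finite Y" "finite (\<Union>\<Delta>1)" "finite (\<Union>\<Delta>2)" "X \<noteq> {}"
    and "S \<inter> (X \<union> Y \<union> \<Union>\<Delta>1 \<union> \<Union>\<Delta>2) = {}"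
  shows "homology_iso TYPE('k::field) (cone X \<Delta>1 \<union> cone Y \<Delta>2) d (cone (X \<union> S) \<Delta>1 \<union> cone Y \<Delta>2) d"
  using assms(1,7)
proof (induction S rule: finite_induct)
  case empty
  show ?case by (simp add: homology_iso_refl)
next
  case (insert v S)
  have "homology_iso TYPE('k) (cone X \<Delta>1 \<union> cone Y \<Delta>2) d (cone (X \<union> S) \<Delta>1 \<union> cone Y \<Delta>2) d"
    using insert by blast
  moreover have "homology_iso TYPE('k) (cone (X \<union> S) \<Delta>1 \<union> cone Y \<Delta>2) d
      (cone (insert v (X \<union> S)) \<Delta>1 \<union> cone Y \<Delta>2) d"
    using insert assms(2-6) by (intro homology_iso_cone_insert) auto
  ultimately show ?case by (simp add: homology_iso_trans)
qed

lemma homology_iso_cone_apex: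
  assumes "finite X" "finite X'" "finite Y" "finite (\<Union>\<Delta>1)" "finite (\<Union>\<Delta>2)" "X \<noteq> {}" "X' \<noteq> {}"
    and "X \<inter> Y = {}" "X' \<inter> Y = {}" "(X \<union> X') \<inter> (\<Union>\<Delta>1 \<union> \<Union>\<Delta>2) = {}"
  shows "homology_iso TYPE('k::field) (cone X \<Delta>1 \<union> cone Y \<Delta>2) d (cone X' \<Delta>1 \<union> cone Y \<Delta>2) d"
proof -
  have to_union: "homology_iso TYPE('k)
      (cone X \<Delta>1 \<union> cone Y \<Delta>2) d (cone (X \<union> (X' - X)) \<Delta>1 \<union> cone Y \<Delta>2) d"
    using assms by (intro homology_iso_cone_Un) auto
  have "homology_iso TYPE('k)
      (cone X' \<Delta>1 \<union> cone Y \<Delta>2) d (cone (X' \<union> (X - X')) \<Delta>1 \<union> cone Y \<Delta>2) d"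
    using assms by (intro homology_iso_cone_Un) auto
  moreover have "X' \<union> (X - X') = X \<union> (X' - X)" by blast
  ultimately show ?thesis using homology_iso_trans[OF to_union homology_iso_sym] by simp
qed

lemma homology_iso_cone_fresh_apexes:
  assumes "finite A" "finite B" "finite (\<Union>\<Delta>1)" "finite (\<Union>\<Delta>2)" "A \<noteq> {}" "B \<noteq> {}"
    and "A \<inter> B = {}" "(A \<union> B) \<inter> (\<Union>\<Delta>1 \<union> \<Union>\<Delta>2) = {}"
    and "N \<noteq> M" "{N, M} \<inter> (A \<union> B \<union> \<Union>\<Delta>1 \<union> \<Union>\<Delta>2) = {}"
  shows "homology_iso TYPE('k::field) (cone A \<Delta>1 \<union> cone B \<Delta>2) d (cone {N} \<Delta>1 \<union> cone {M} \<Delta>2) d"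
proof -
  have "homology_iso TYPE('k) (cone A \<Delta>1 \<union> cone B \<Delta>2) d (cone {N} \<Delta>1 \<union> cone B \<Delta>2) d"
    using assms by (intro homology_iso_cone_apex) auto
  moreover have "homology_iso TYPE('k) (cone B \<Delta>2 \<union> cone {N} \<Delta>1) d (cone {M} \<Delta>2 \<union> cone {N} \<Delta>1) d"
    using assms by (intro homology_iso_cone_apex) auto
  then have "homology_iso TYPE('k) (cone {N} \<Delta>1 \<union> cone B \<Delta>2) d (cone {N} \<Delta>1 \<union> cone {M} \<Delta>2) d"
    by (simp only: Un_commute)
  ultimately show ?thesis by (rule homology_iso_trans)
qed

theorem corollary3p2:
  fixes n :: nat and \<Delta>1 \<Delta>2 :: "nat set set" and A B A' B' :: "nat set"
  assumes "simplicial_complex n \<Delta>1" and "simplicial_complex n \<Delta>2"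
    and "A \<subseteq> {1..n}" "B \<subseteq> {1..n}" "A' \<subseteq> {1..n}" "B' \<subseteq> {1..n}"
    and "A \<noteq> {}" "B \<noteq> {}" "A' \<noteq> {}" "B' \<noteq> {}"
    and "A \<inter> B = {}" "A' \<inter> B' = {}"
    and "(A \<union> B) \<inter> vertex_set (\<Delta>1 \<union> \<Delta>2) = {}"
    and "(A' \<union> B') \<inter> vertex_set (\<Delta>1 \<union> \<Delta>2) = {}"
    and "i > 0"
  shows "homology_iso TYPE('k::field)
           (cone A \<Delta>1 \<union> cone B \<Delta>2) i (cone A' \<Delta>1 \<union> cone B' \<Delta>2) i"
proof -
  have vertices: "\<Union>\<Delta>1 \<subseteq> {1..n}" "\<Union>\<Delta>2 \<subseteq> {1..n}"
    using assms(1,2) by (auto simp: simplicial_complex_def)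
  have finite: "finite C" if "C \<subseteq> {1..n}" for C
    using that by (rule finite_subset) simp
  have fresh: "{n + 1, n + 2} \<inter> (C \<union> D \<union> \<Union>\<Delta>1 \<union> \<Union>\<Delta>2) = {}"
    if "C \<subseteq> {1..n}" "D \<subseteq> {1..n}" for C D
    using that vertices by auto
  have apexes: "(C \<union> D) \<inter> (\<Union>\<Delta>1 \<union> \<Union>\<Delta>2) = {}"
    if "(C \<union> D) \<inter> vertex_set (\<Delta>1 \<union> \<Delta>2) = {}" for C D
    using that by (simp add: vertex_set_def)
  have "homology_iso TYPE('k) (cone A \<Delta>1 \<union> cone B \<Delta>2) i (cone {n + 1} \<Delta>1 \<union> cone {n + 2} \<Delta>2) i"
    by (rule homology_iso_cone_fresh_apexes[OF finite[OF assms(3)] finite[OF assms(4)]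
          finite[OF vertices(1)] finite[OF vertices(2)] assms(7,8,11) apexes[OF assms(13)] _
          fresh[OF assms(3,4)]]) simp
  moreover have "homology_iso TYPE('k) (cone A' \<Delta>1 \<union> cone B' \<Delta>2) i (cone {n + 1} \<Delta>1 \<union> cone {n + 2} \<Delta>2) i"
    by (rule homology_iso_cone_fresh_apexes[OF finite[OF assms(5)] finite[OF assms(6)]
          finite[OF vertices(1)] finite[OF vertices(2)] assms(9,10,12) apexes[OF assms(14)] _
          fresh[OF assms(5,6)]]) simp
  ultimately show ?thesis by (rule homology_iso_trans[OF _ homology_iso_sym])
qed

end
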